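(* Let $T_1$ and $T_2$ be two rooted binary trees, each with $n$ leaves labelled by the same set of $n$ distinct labels. Let $u_1,u_2,\dots,u_k$ be a root-to-leaf path of $\mathit{MCD}(T_1)$. Then $\sum_{i=1}^{k}|T_2(u_i)|=\mathrm{O}(n)$.
   Context: A rooted binary tree is one in which every internal node has exactly two children, a left and a right child. $|T|$ denotes the number of nodes of a tree $T$. A component of $T_1$ is a connected set of its nodes. An edge of $T_1$ crosses the boundary of $C$ if exactly one of its endpoints lies in $C$. It is an edge from below if its endpoint in $C$ is the parent endpoint. A centroid of a component $C$ is a node $u\in C$ such that every connected component of $C\setminus\{u\}$ has at most $|C|/2$ nodes. Removing a node $s$ from $C$ leaves at most three connected components: $C_l$ containing the left child of $s$, $C_r$ containing the right child of $s$, and $C_p$ containing the parent of $s$, each intersected with $C$ and possibly empty. The modified centroid decomposition $\mathit{MCD}(T_1)$ is a ternary tree built recursively, starting from the component $C=T_1$. For the current component $C$ a splitting node $s$ is chosen. If $C$ has no edge from below, $s$ is a centroid $c$ of $C$. Otherwise $C$ has exactly one edge $(x,y)$ from below with $x\in C$; let $c$ be a centroid of $C$, and let $s$ be the lowest common ancestor of $x$ and $c$. The node $u$ of $\mathit{MCD}(T_1)$ corresponding to $C$ stores $s$, and we write $C_u=C$. The children of $u$ are the nodes corresponding to the nonempty components among $C_l,C_r,C_p$ obtained by removing $s$ from $C$. For a node $u$ of $\mathit{MCD}(T_1)$, let $\Lambda=L(C_u)$ be the set of labels of the leaves of $T_1$ lying in $C_u$. Then $T_2(u)$ is the contraction of $T_2$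 with respect to $\Lambda$, obtained in three steps: 1. prune all leaves of $T_2$ whose labels are not in $\Lambda$; 2. repeatedly prune internal nodes that have no children; 3. repeatedly contract internal nodes that have exactly one child. The result is a binary tree with leaf set $\Lambda$. *)

theory Defs
  imports Main "HOL-Library.Sublist"
begin

datatype 'a btree = Leaf 'a | Node "'a btree" "'a btree"

fun leaves :: "'a btree \<Rightarrow> 'a list" where
  "leaves (Leaf a) = [a]"
| "leaves (Node l r) = leaves l @ leaves r"

text \<open>Nodes of a tree are identified with their positions: the list of
left (False) / right (True) turns from the root. Ancestor = prefix,
parent = butlast, left child = p @ [False], right child = p @ [True].\<close>
fun nodes :: "'a btree \<Rightarrow> bool list set" where
  "nodes (Leaf a) = {[]}"
| "nodes (Node l r) = {[]} \<union> (Cons False) ` nodes l \<union> (Cons True) ` nodes r"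

fun subtree :: "'a btree \<Rightarrow> bool list \<Rightarrow> 'a btree" where
  "subtree t [] = t"
| "subtree (Node l r) (False # p) = subtree l p"
| "subtree (Node l r) (True # p) = subtree r p"
| "subtree (Leaf a) (_ # p) = Leaf a"

fun tsize :: "'a btree \<Rightarrow> nat" where
  "tsize (Leaf a) = 1"
| "tsize (Node l r) = Suc (tsize l + tsize r)"

definition adj :: "bool list \<Rightarrow> bool list \<Rightarrow> bool" where
  "adj p q \<longleftrightarrow> (\<exists>b. q = p @ [b]) \<or> (\<exists>b. p = q @ [b])"

definition adjrel :: "bool list set \<Rightarrow> (bool list \<times> bool list) set" where
  "adjrel D = {(p, q). p \<in> D \<and> q \<in> D \<and> adj p q}"

definition comp :: "bool list set \<Rightarrow> bool list \<Rightarrow> bool list set" where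
  "comp D x = {y. x \<in> D \<and> (x, y) \<in> (adjrel D)\<^sup>*}"

definition centroid :: "bool list set \<Rightarrow> bool list \<Rightarrow> bool" where
  "centroid C u \<longleftrightarrow> u \<in> C \<and>
     (\<forall>x \<in> C - {u}. 2 * card (comp (C - {u}) x) \<le> card C)"

definition edges_below :: "'a btree \<Rightarrow> bool list set \<Rightarrow> (bool list \<times> bool list) set" where
  "edges_below T C = {(x, y). x \<in> C \<and> y \<in> nodes T - C \<and> (\<exists>b. y = x @ [b])}"

text \<open>Valid choices of the splitting node s of component C in the modified centroid
decomposition (any choice of centroid c is allowed).\<close>
definition split_ok :: "'a btree \<Rightarrow> bool list set \<Rightarrow> bool list \<Rightarrow> bool" where
  "split_ok T C s \<longleftrightarrow> (\<exists>c. centroid C c \<and>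
     ((edges_below T C = {} \<and> s = c) \<or>
      (\<exists>x y. edges_below T C = {(x, y)} \<and> s = longest_common_prefix x c)))"

definition mcd_children :: "bool list set \<Rightarrow> bool list \<Rightarrow> bool list set set" where
  "mcd_children C s =
     {comp (C - {s}) (s @ [False]), comp (C - {s}) (s @ [True]),
      (if s = [] then {} else comp (C - {s}) (butlast s))} - {{}}"

definition mcd_step :: "'a btree \<Rightarrow> bool list set \<Rightarrow> bool list set \<Rightarrow> bool" where
  "mcd_step T C C' \<longleftrightarrow> (\<exists>s. split_ok T C s \<and> C' \<in> mcd_children C s)"

definition mcd_leaf :: "'a btree \<Rightarrow> bool list set \<Rightarrow> bool" where
  "mcd_leaf T C \<longleftrightarrow> (\<exists>s. split_ok T C s \<and> mcd_children C s = {})"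

text \<open>A root-to-leaf path u_1..u_k of MCD(T), given by the components C_{u_1},...,C_{u_k}.\<close>
definition mcd_root_leaf_path :: "'a btree \<Rightarrow> bool list set list \<Rightarrow> bool" where
  "mcd_root_leaf_path T Cs \<longleftrightarrow> Cs \<noteq> [] \<and> hd Cs = nodes T \<and>
     (\<forall>i. Suc i < length Cs \<longrightarrow> mcd_step T (Cs ! i) (Cs ! Suc i)) \<and>
     mcd_leaf T (last Cs)"

definition leaf_labels :: "'a btree \<Rightarrow> bool list set \<Rightarrow> 'a set" where
  "leaf_labels T C = {a. \<exists>p \<in> C. p \<in> nodes T \<and> subtree T p = Leaf a}"

text \<open>Contraction of T2 w.r.t. a label set: prune leaves not in the set, prune
childless internal nodes, contract internal nodes with one child. None = empty tree.\<close>
fun contract :: "'a set \<Rightarrow> 'a btree \<Rightarrow> 'a btree option" where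
  "contract \<Lambda> (Leaf a) = (if a \<in> \<Lambda> then Some (Leaf a) else None)"
| "contract \<Lambda> (Node l r) =
     (case (contract \<Lambda> l, contract \<Lambda> r) of
        (None, None) \<Rightarrow> None
      | (Some t, None) \<Rightarrow> Some t
      | (None, Some t) \<Rightarrow> Some t
      | (Some t1, Some t2) \<Rightarrow> Some (Node t1 t2))"

definition osize :: "'a btree option \<Rightarrow> nat" where
  "osize t = (case t of None \<Rightarrow> 0 | Some t' \<Rightarrow> tsize t')"

definition contracted_size :: "'a btree \<Rightarrow> 'a btree \<Rightarrow> bool list set \<Rightarrow> nat" where
  "contracted_size T1 T2 C = osize (contract (leaf_labels T1 C) T2)"

end

(*
  Each MCD step either halves the component, or produces a component with no edge
  from below.  Indeed, a child missing the centroid c has at most |C|/2 nodes; a child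
  containing c lies strictly below the splitting node s = lca(x, c), hence cannot contain
  x, and so has no edge from below.  A component without an edge from below is split at
  its centroid, so the next component is at most half as large.  Hence the component
  sizes along a root-to-leaf path sum to at most 4 |T1|.  Finally |T2(u)| is at most
  twice the number of leaves of T1 in C_u, so the sum is at most 8 |T1| < 16 n.
*)
theory Submission
  imports Defs
begin

section \<open>Connected components\<close>

lemma comp_subset: "comp D x \<subseteq> D"
proof
  fix y assume "y \<in> comp D x"
  then have "(x, y) \<in> (adjrel D)\<^sup>*" "x \<in> D" by (auto simp: comp_def)
  then show "y \<in> D"
    by (induction rule: rtrancl_induct) (auto simp: adjrel_def)
qed

lemma mem_of_comp_nonempty: "comp D x \<noteq> {} \<Longrightarrow> x \<in> D"
  by (auto simp: comp_def)

lemma self_in_comp: "x \<in> D \<Longrightarrow> x \<in> comp D x"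
  by (auto simp: comp_def)

lemma comp_adj_closed:
  assumes "y \<in> comp D x" "v \<in> D" "adj y v"
  shows "v \<in> comp D x"
proof -
  have "(y, v) \<in> adjrel D" using assms comp_subset by (auto simp: adjrel_def)
  then show ?thesis using assms(1) by (auto simp: comp_def intro: rtrancl_into_rtrancl)
qed

lemma comp_eq_if_mem:
  assumes "c \<in> comp D z"
  shows "comp D c = comp D z"
proof -
  have z: "z \<in> D" and zc: "(z, c) \<in> (adjrel D)\<^sup>*" using assms by (auto simp: comp_def)
  have "sym (adjrel D)" by (auto simp: sym_def adjrel_def adj_def)
  then have "(c, z) \<in> (adjrel D)\<^sup>*" using zc by (blast intro: symD sym_rtrancl)
  then show ?thesis using z zc assms comp_subset unfolding comp_def
    by (blast intro: rtrancl_trans)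
qed

lemma comp_subset_comp_if_subset:
  assumes "comp D z \<subseteq> E"
  shows "comp D z \<subseteq> comp E z"
proof
  fix y assume "y \<in> comp D z"
  then have z: "z \<in> D" and zy: "(z, y) \<in> (adjrel D)\<^sup>*" by (auto simp: comp_def)
  from zy have "(z, y) \<in> (adjrel E)\<^sup>* \<and> y \<in> comp D z"
  proof (induction rule: rtrancl_induct)
    case base
    show ?case using z self_in_comp by blast
  next
    case (step y v)
    have "v \<in> comp D z" using step z by (auto simp: comp_def intro: rtrancl_into_rtrancl)
    then have "(y, v) \<in> adjrel E" using step assms by (auto simp: adjrel_def)
    then show ?case using step \<open>v \<in> comp D z\<close> by (auto intro: rtrancl_into_rtrancl)
  qed
  then show "y \<in> comp E z"
    using assms self_in_comp[OF z] by (auto simp: comp_def)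
qed

lemma prefix_if_in_comp_Diff:
  assumes "prefix (s @ [b]) c" "y \<in> comp (D - {s}) c"
  shows "prefix (s @ [b]) y"
proof -
  have "(c, y) \<in> (adjrel (D - {s}))\<^sup>*" using assms(2) by (auto simp: comp_def)
  then show ?thesis
  proof (induction rule: rtrancl_induct)
    case base
    show ?case by (rule assms(1))
  next
    case (step y v)
    then have "adj y v" "v \<noteq> s" by (auto simp: adjrel_def)
    then consider b' where "v = y @ [b']" | b' where "y = v @ [b']"
      unfolding adj_def by blast
    then show ?case
    proof cases
      case 2
      then have "s @ [b] = v @ [b'] \<or> prefix (s @ [b]) v"
        using step.IH by (simp only: prefix_snoc)
      then show ?thesis using \<open>v \<noteq> s\<close> by auto
    qed (use step.IH in auto)
  qed
qed

section \<open>One step of the modified centroid decomposition\<close>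

lemma mcd_childrenE:
  assumes "C' \<in> mcd_children C s"
  obtains z where "z \<in> C - {s}" "C' = comp (C - {s}) z"
proof -
  have "C' \<noteq> {}" using assms by (auto simp: mcd_children_def)
  moreover have "\<exists>z. C' = comp (C - {s}) z"
    using assms by (auto simp: mcd_children_def split: if_splits)
  ultimately show ?thesis using that mem_of_comp_nonempty by blast
qed

lemma mcd_child_subset: "C' \<in> mcd_children C s \<Longrightarrow> C' \<subseteq> C - {s}"
  by (metis comp_subset mcd_childrenE)

lemma card_comp_le_half_if_centroid_notin:
  assumes "finite C" "centroid C c" "c \<notin> comp D z" "D \<subseteq> C"
  shows "2 * card (comp D z) \<le> card C"
proof (cases "z \<in> D")
  case True
  have "comp D z \<subseteq> C - {c}" using assms(3,4) comp_subset by blast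
  then have sub: "comp D z \<subseteq> comp (C - {c}) z" by (rule comp_subset_comp_if_subset)
  have "z \<in> C - {c}" using True assms(3,4) self_in_comp by blast
  then have "2 * card (comp (C - {c}) z) \<le> card C" using assms(2) by (auto simp: centroid_def)
  moreover have "finite (comp (C - {c}) z)" using assms(1) comp_subset finite_subset by blast
  ultimately show ?thesis using sub card_mono by (meson le_trans mult_le_mono2)
qed (simp add: comp_def)

lemma edges_below_comp_Diff:
  assumes "(p, q) \<in> edges_below T (comp (C - {s}) z)"
  shows "(p, q) \<in> edges_below T C \<or> q = s"
proof -
  obtain b where p: "p \<in> comp (C - {s}) z" and q: "q \<in> nodes T" "q \<notin> comp (C - {s}) z"
    and qp: "q = p @ [b]"
    using assms by (auto simp: edges_below_def)
  have "q \<notin> C - {s}" using comp_adj_closed[OF p _ _] q(2) qp by (auto simp: adj_def)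
  moreover have "p \<in> C" using p comp_subset by blast
  ultimately show ?thesis using q(1) qp by (auto simp: edges_below_def)
qed

lemma edges_below_child_containing_centroid:
  assumes ch: "C' \<in> mcd_children C s" and c: "c \<in> C'"
    and eb: "edges_below T C = {(x, y)}" and s: "s = longest_common_prefix x c"
  shows "edges_below T C' = {}"
proof -
  obtain z where C': "C' = comp (C - {s}) z" using ch by (rule mcd_childrenE)
  have "c \<noteq> s" using c mcd_child_subset[OF ch] by blast
  moreover have "prefix s c" using s longest_common_prefix_prefix2 by metis
  ultimately obtain b rest where "c = s @ b # rest"
    by (metis append.right_neutral neq_Nil_conv prefix_def)
  then have sb_c: "prefix (s @ [b]) c" by simp
  have below: "prefix (s @ [b]) q" if "q \<in> C'" for q
    using prefix_if_in_comp_Diff[OF sb_c] that c C' comp_eq_if_mem by metis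
  have "False" if pq: "(p, q) \<in> edges_below T C'" for p q
  proof -
    have p: "p \<in> C'" and qp: "\<exists>b'. q = p @ [b']" using pq by (auto simp: edges_below_def)
    from edges_below_comp_Diff[of p q T C s z] pq C'
    consider "(p, q) \<in> edges_below T C" | "q = s" by blast
    then show False
    proof cases
      case 1
      then have "prefix (s @ [b]) x" using eb below[OF p] by auto
      then have "prefix (s @ [b]) s" using sb_c s longest_common_prefix_max_prefix by metis
      then show False by (metis prefix_length_le length_append_singleton not_less_eq_eq order_refl)
    next
      case 2
      then have "length s = Suc (length p)" using qp by auto
      then show False using prefix_length_le[OF below[OF p]] by simp
    qed
  qed
  then show ?thesis by fast
qed

lemma mcd_step_subset: "mcd_step T C C' \<Longrightarrow> C' \<subseteq> C"
  using mcd_child_subset by (fastforce simp: mcd_step_def)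

lemma mcd_step_halves_or_no_edges_below:
  assumes "finite C" "mcd_step T C C'"
  shows "(2 * card C' \<le> card C \<or> edges_below T C' = {}) \<and>
         (edges_below T C = {} \<longrightarrow> 2 * card C' \<le> card C)"
proof -
  obtain s where ok: "split_ok T C s" and ch: "C' \<in> mcd_children C s"
    using assms(2) by (auto simp: mcd_step_def)
  obtain z where C': "C' = comp (C - {s}) z" using ch by (rule mcd_childrenE)
  obtain c where cen: "centroid C c" and
    cases: "(edges_below T C = {} \<and> s = c) \<or>
            (\<exists>x y. edges_below T C = {(x, y)} \<and> s = longest_common_prefix x c)"
    using ok by (auto simp: split_ok_def)
  show ?thesis
  proof (cases "c \<in> C'")
    case False
    have "C - {s} \<subseteq> C" by blast
    with False C' show ?thesis
      using card_comp_le_half_if_centroid_notin[OF assms(1) cen] by blast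
  next
    case True
    then have "c \<noteq> s" using mcd_child_subset[OF ch] by blast
    then obtain x y where eb: "edges_below T C = {(x, y)}" and s: "s = longest_common_prefix x c"
      using cases by blast
    then show ?thesis
      using edges_below_child_containing_centroid[OF ch True eb s] by simp
  qed
qed

section \<open>Component sizes along a path\<close>

lemma sum_list_le_if_halving_or_marked:
  fixes f :: "'a \<Rightarrow> nat"
  assumes "successively (\<lambda>a b. f b \<le> f a \<and> (2 * f b \<le> f a \<or> g b) \<and> (g a \<longrightarrow> 2 * f b \<le> f a)) xs"
    (is "successively ?R xs")
  shows "sum_list (map f xs) \<le> (if g (hd xs) then 3 else 4) * f (hd xs)"
  using assms
proof (induction xs)
  case (Cons a xs)
  show ?case
  proof (cases xs)
    case (Cons b ys)
    have "?R a b" "successively ?R xs" using \<open>xs = b # ys\<close> \<open>successively ?R (a # xs)\<close> by simp_all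
    have "sum_list (map f xs) \<le> (if g b then 3 else 4) * f b"
      using Cons.IH \<open>successively ?R xs\<close> \<open>xs = b # ys\<close> by simp
    also have "\<dots> \<le> (if g a then 2 else 3) * f a"
      using \<open>?R a b\<close> by (cases "g a"; cases "g b") simp_all
    finally show ?thesis by (cases "g a") simp_all
  qed simp
qed simp

lemma subset_hd_if_mcd_steps:
  "successively (mcd_step T) Cs \<Longrightarrow> C \<in> set Cs \<Longrightarrow> C \<subseteq> hd Cs"
proof (induction Cs)
  case (Cons A Cs)
  show ?case
  proof (cases "C = A")
    case False
    then have "C \<in> set Cs" "C \<subseteq> hd Cs" "mcd_step T A (hd Cs)"
      using Cons by (auto simp: successively_Cons)
    then show ?thesis using mcd_step_subset by force
  qed simp
qed simp

lemma sum_card_mcd_path: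
  assumes "finite (hd Cs)" "successively (mcd_step T) Cs"
  shows "sum_list (map card Cs) \<le> 4 * card (hd Cs)"
proof -
  have fin: "finite C" if "C \<in> set Cs" for C
    using subset_hd_if_mcd_steps[OF assms(2) that] assms(1) by (rule finite_subset)
  have "successively (\<lambda>A B. card B \<le> card A \<and> (2 * card B \<le> card A \<or> edges_below T B = {}) \<and>
      (edges_below T A = {} \<longrightarrow> 2 * card B \<le> card A)) Cs"
  proof (rule successively_mono[OF assms(2)])
    fix A B assume A: "A \<in> set Cs" and "B \<in> set Cs" and step: "mcd_step T A B"
    have "card B \<le> card A" using card_mono[OF fin[OF A] mcd_step_subset[OF step]] .
    with mcd_step_halves_or_no_edges_below[OF fin[OF A] step]
    show "card B \<le> card A \<and> (2 * card B \<le> card A \<or> edges_below T B = {}) \<and>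
      (edges_below T A = {} \<longrightarrow> 2 * card B \<le> card A)" by blast
  qed
  then have "sum_list (map card Cs) \<le> (if edges_below T (hd Cs) = {} then 3 else 4) * card (hd Cs)"
    by (rule sum_list_le_if_halving_or_marked[where f = card and g = "\<lambda>C. edges_below T C = {}"])
  also have "\<dots> \<le> 4 * card (hd Cs)" by simp
  finally show ?thesis .
qed

section \<open>Size of a contraction\<close>

lemma finite_nodes: "finite (nodes t)"
  by (induction t) auto

lemma card_nodes: "card (nodes t) = tsize t"
proof (induction t)
  case (Node l r)
  have "card (Cons False ` nodes l \<union> Cons True ` nodes r) = tsize l + tsize r"
    using Node by (subst card_Un_disjoint) (auto simp: finite_nodes card_image)
  then show ?case by (simp add: finite_nodes image_iff)
qed simp

lemma tsize_leaves: "tsize t + 1 = 2 * length (leaves t)"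
  by (induction t) auto

lemma contract_eq_None_iff: "contract L t = None \<longleftrightarrow> (\<forall>a \<in> set (leaves t). a \<notin> L)"
  by (induction t) (auto split: option.splits)

lemma leaves_contract:
  "contract L t = Some t' \<Longrightarrow> leaves t' = filter (\<lambda>a. a \<in> L) (leaves t)"
proof (induction t arbitrary: t')
  case (Node l r)
  have no_labels: "filter (\<lambda>a. a \<in> L) (leaves u) = []" if "contract L u = None" for u
    using that by (simp add: contract_eq_None_iff filter_empty_conv)
  show ?case
  proof (cases "contract L l")
    case None
    with Node.prems obtain tr where "contract L r = Some tr" "t' = tr"
      by (auto split: option.splits)
    then show ?thesis using Node.IH(2) no_labels[OF None] by simp
  next
    case (Some tl)
    show ?thesis
    proof (cases "contract L r")
      case None
      then show ?thesis using Some Node.prems Node.IH(1) no_labels[OF None] by simp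
    next
      case (Some tr)
      then show ?thesis using \<open>contract L l = Some tl\<close> Node.prems Node.IH by auto
    qed
  qed
qed (auto split: if_splits)

lemma osize_contract: "osize (contract L t) \<le> 2 * length (filter (\<lambda>a. a \<in> L) (leaves t))"
proof (cases "contract L t")
  case (Some t')
  then show ?thesis using tsize_leaves[of t'] leaves_contract[OF Some] by (simp add: osize_def)
qed (simp add: osize_def)

lemma leaf_labels_subset_image: "leaf_labels T C \<subseteq> (\<lambda>p. hd (leaves (subtree T p))) ` C"
  unfolding leaf_labels_def by force

lemma contracted_size_le:
  assumes "finite C" "distinct (leaves T2)"
  shows "contracted_size T1 T2 C \<le> 2 * card C"
proof -
  let ?L = "leaf_labels T1 C"
  have finite_L: "finite ?L"
    using leaf_labels_subset_image by (rule finite_subset) (rule finite_imageI[OF assms(1)])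
  have "length (filter (\<lambda>a. a \<in> ?L) (leaves T2)) = card (set (filter (\<lambda>a. a \<in> ?L) (leaves T2)))"
    by (rule distinct_card[OF distinct_filter[OF assms(2)], symmetric])
  also have "\<dots> \<le> card ?L"
    by (rule card_mono[OF finite_L]) auto
  also have "\<dots> \<le> card ((\<lambda>p. hd (leaves (subtree T1 p))) ` C)"
    using leaf_labels_subset_image by (rule card_mono[OF finite_imageI[OF assms(1)]])
  also have "\<dots> \<le> card C"
    by (rule card_image_le[OF assms(1)])
  finally have "length (filter (\<lambda>a. a \<in> ?L) (leaves T2)) \<le> card C" .
  moreover have "contracted_size T1 T2 C \<le> 2 * length (filter (\<lambda>a. a \<in> ?L) (leaves T2))"
    unfolding contracted_size_def by (rule osize_contract)
  ultimately show ?thesis by simp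
qed

theorem lemma3:
  "\<exists>c::nat. \<forall>(T1::'a btree) (T2::'a btree) n Cs.
     length (leaves T1) = n \<and> length (leaves T2) = n \<and>
     distinct (leaves T1) \<and> distinct (leaves T2) \<and>
     set (leaves T1) = set (leaves T2) \<and>
     mcd_root_leaf_path T1 Cs \<longrightarrow>
     (\<Sum>i<length Cs. contracted_size T1 T2 (Cs ! i)) \<le> c * n"
proof (intro exI[of _ 16] allI impI)
  fix T1 T2 :: "'a btree" and n Cs
  assume "length (leaves T1) = n \<and> length (leaves T2) = n \<and>
     distinct (leaves T1) \<and> distinct (leaves T2) \<and>
     set (leaves T1) = set (leaves T2) \<and> mcd_root_leaf_path T1 Cs"
  then have n: "length (leaves T1) = n" and dist: "distinct (leaves T2)"
    and root: "hd Cs = nodes T1" and path: "successively (mcd_step T1) Cs"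
    by (auto simp: mcd_root_leaf_path_def successively_conv_nth)
  have fin: "finite C" if "C \<in> set Cs" for C
    using subset_hd_if_mcd_steps[OF path that] root finite_nodes[of T1] by (metis finite_subset)
  have "(\<Sum>i<length Cs. contracted_size T1 T2 (Cs ! i)) = (\<Sum>C\<leftarrow>Cs. contracted_size T1 T2 C)"
    by (simp add: sum_list_sum_nth atLeast0LessThan)
  also have "\<dots> \<le> (\<Sum>C\<leftarrow>Cs. 2 * card C)"
    by (rule sum_list_mono) (use fin contracted_size_le[OF _ dist] in blast)
  also have "\<dots> = 2 * (\<Sum>C\<leftarrow>Cs. card C)"
    by (rule sum_list_const_mult)
  also have "\<dots> \<le> 8 * tsize T1"
    using sum_card_mcd_path[OF _ path] root finite_nodes[of T1] card_nodes[of T1] by simp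
  also have "\<dots> \<le> 16 * n"
    using tsize_leaves[of T1] n by simp
  finally show "(\<Sum>i<length Cs. contracted_size T1 T2 (Cs ! i)) \<le> 16 * n" .
qed

end
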